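(* Let $\Pi$ be a cGAP such that no predicate symbol appearing in the head of its VC rule appears in the head of any GAP rule of $\Pi$, and let $S$ be a state for $\Pi$. Then $\mathcal{MM}(\Pi_S)$ is a coherent model of $\Pi$.
   Context: Fix disjoint sets of unary vertex predicate symbols and binary edge predicate symbols; constants are the vertices of a finite social network. An annotation is an element of $[0,1]$, an annotation variable (ranging over $[0,1]$), or $f(t_1,\dots,t_k)$ for an annotation function symbol $f$ denoting a fixed function $[0,1]^k\to[0,1]$ and annotations $t_i$. An annotated atom is $A:\mu$ with $A$ an atom and $\mu$ an annotation; an annotated (GAP) rule has the form $A_0:f(\mu_1,\dots,\mu_n)\leftarrow A_1:\mu_1,\dots,A_n:\mu_n$ ($n=0$: a fact); a GAP is a finite set of such rules. A vertex choice (VC) rule of size $m$ is $b_1(X),\dots,b_m(X)\hookleftarrow a_1(X),\dots,a_m(X)$ with $a_i,b_i$ vertex predicate symbols; its ground instance for vertex $v$ is $b_1(v),\dots,b_m(v)\hookleftarrow a_1(v),\dots,a_m(v)$. A choice GAP (cGAP) $\Pi$ is a finite set of annotated rules plus exactly one VC rule. An interpretation is a map $I$ from ground atoms to $[0,1]$, ordered pointwise ($I_1\preceq I_2$ iff $I_1(A)\le I_2(A)$ for all $A$). $I\models A:\mu$ iff $I(A)\ge\mu$; $I$ satisfies a ground annotated rule iff $I(A_0)$ is at least the head annotation or some body annotated atom is not satisfied; $I$ satisfies a ground VC rule $B_1,\dots,B_m\hookleftarrow A_1,\dots,A_m$ iff there is $i$ with $I(B_i)=I(A_i)$ and $I(B_j)=0$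 for all $j\neq i$; a non-ground rule is satisfied iff all its ground instances are; a model of $\Pi$ satisfies all its rules. Every GAP $P$ has a unique $\preceq$-minimal model, denoted $\mathcal{MM}(P)$. Coherence transform: for an interpretation $I$, ${\rm coh}(\Pi,I)$ is the GAP consisting of all ground non-VC rules of $\Pi$ together with, for each ground VC-rule instance $B_1(v),\dots,B_m(v)\hookleftarrow A_1(v),\dots,A_m(v)$ and each $i$ with $I(A_i(v))>0$ and $I(A_i(v))=I(B_i(v))$, the rule $B_i(v):\mu\leftarrow A_i(v):\mu$. A model $M$ of $\Pi$ is coherent iff $M=\mathcal{MM}({\rm coh}(\Pi,M))$. Game view: each vertex $v$ is a player $\mathcal P_v$ with action set $Q=\{1,\dots,m\}$ ($m$ the size of the VC rule); a state is a map $S$ from players to $Q$. The induced ground GAP $\Pi_S$ is obtained from the grounding of $\Pi$ by replacing each ground VC-rule instance $b_1(v),\dots,b_m(v)\hookleftarrow a_1(v),\dots,a_m(v)$ by the annotated rule $b_i(v):\mu\leftarrow a_i(v):\mu$ with $i=S(\mathcal P_v)$, keeping all ground non-VC rules. *)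

theory Defs
  imports Main "HOL.Real"
begin

text \<open>A function symbol is represented by the fixed function it denotes.\<close>

datatype annot = ACon real | AVar nat | AFun "real list \<Rightarrow> real" "annot list"

fun aval :: "(nat \<Rightarrow> real) \<Rightarrow> annot \<Rightarrow> real" where
  "aval \<sigma> (ACon c) = c"
| "aval \<sigma> (AVar x) = \<sigma> x"
| "aval \<sigma> (AFun f ts) = f (map (aval \<sigma>) ts)"

fun wf_annot :: "annot \<Rightarrow> bool" where
  "wf_annot (ACon c) = (0 \<le> c \<and> c \<le> 1)"
| "wf_annot (AVar x) = True"
| "wf_annot (AFun f ts) =
     ((\<forall>xs. length xs = length ts \<and> set xs \<subseteq> {0..1} \<longrightarrow> f xs \<in> {0..1})
      \<and> (\<forall>t\<in>set ts. wf_annot t))"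

text \<open>Object terms: constants are vertices, variables are indexed by nat.\<close>
datatype 'v trm = Cst 'v | Var nat

text \<open>Atoms: unary vertex predicates (type 'p) and binary edge predicates (type 'e);
 these are disjoint by typing. Ground atoms are ('p,'e,'v) atom, possibly non-ground
 atoms are ('p,'e,'v trm) atom.\<close>
datatype ('p, 'e, 't) atom = VAt 'p 't | EAt 'e 't 't

text \<open>An annotated rule  A0 : f(mu1,...,mun) <- A1:mu1, ..., An:mun ;
 the head annotation is the function f applied to the body annotations.\<close>
datatype ('p, 'e, 't) grule =
  GRule (ghead: "('p, 'e, 't) atom") (gfun: "real list \<Rightarrow> real")
        (gbody: "(('p, 'e, 't) atom \<times> annot) list")

type_synonym ('p, 'e, 'v) prule = "('p, 'e, 'v trm) grule"
type_synonym ('p, 'e, 'v) interp = "('p, 'e, 'v) atom \<Rightarrow> real"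

definition wf_rule :: "('p, 'e, 't) grule \<Rightarrow> bool" where
  "wf_rule r \<longleftrightarrow>
     (\<forall>xs. length xs = length (gbody r) \<and> set xs \<subseteq> {0..1} \<longrightarrow> gfun r xs \<in> {0..1})
     \<and> (\<forall>p\<in>set (gbody r). wf_annot (snd p))"

fun inst :: "(nat \<Rightarrow> 'v) \<Rightarrow> 'v trm \<Rightarrow> 'v" where
  "inst \<theta> (Cst v) = v"
| "inst \<theta> (Var x) = \<theta> x"

definition gatom :: "(nat \<Rightarrow> 'v) \<Rightarrow> ('p, 'e, 'v trm) atom \<Rightarrow> ('p, 'e, 'v) atom" where
  "gatom \<theta> a = map_atom id id (inst \<theta>) a"

definition is_interp :: "('p, 'e, 'v) interp \<Rightarrow> bool" where
  "is_interp I \<longleftrightarrow> (\<forall>A. 0 \<le> I A \<and> I A \<le> 1)"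

definition sat_rule :: "('p, 'e, 'v) interp \<Rightarrow> ('p, 'e, 'v) prule \<Rightarrow> bool" where
  "sat_rule I r \<longleftrightarrow>
     (\<forall>\<theta> \<sigma>. (\<forall>x. 0 \<le> \<sigma> x \<and> \<sigma> x \<le> 1) \<longrightarrow>
        (\<forall>p\<in>set (gbody r). aval \<sigma> (snd p) \<le> I (gatom \<theta> (fst p))) \<longrightarrow>
        gfun r (map (\<lambda>p. aval \<sigma> (snd p)) (gbody r)) \<le> I (gatom \<theta> (ghead r)))"

definition gap_model :: "('p, 'e, 'v) prule set \<Rightarrow> ('p, 'e, 'v) interp \<Rightarrow> bool" where
  "gap_model P I \<longleftrightarrow> is_interp I \<and> (\<forall>r\<in>P. sat_rule I r)"

definition MM :: "('p, 'e, 'v) prule set \<Rightarrow> ('p, 'e, 'v) interp" where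
  "MM P = (THE I. gap_model P I \<and> (\<forall>J. gap_model P J \<and> J \<le> I \<longrightarrow> J = I))"

text \<open>VC rule  b_1(X),...,b_m(X) <-< a_1(X),...,a_m(X): heads list and body list.\<close>
datatype 'p vcrule = VC (vc_heads: "'p list") (vc_body: "'p list")

datatype ('p, 'e, 'v) cgap = CGAP (gap_rules: "('p, 'e, 'v) prule set") (vc_rule: "'p vcrule")

definition vc_size :: "('p, 'e, 'v) cgap \<Rightarrow> nat" where
  "vc_size \<Pi> = length (vc_heads (vc_rule \<Pi>))"

definition wf_cgap :: "('p, 'e, 'v) cgap \<Rightarrow> bool" where
  "wf_cgap \<Pi> \<longleftrightarrow> finite (gap_rules \<Pi>) \<and> (\<forall>r\<in>gap_rules \<Pi>. wf_rule r)
     \<and> length (vc_body (vc_rule \<Pi>)) = length (vc_heads (vc_rule \<Pi>))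
     \<and> distinct (vc_heads (vc_rule \<Pi>))"

definition sat_vc :: "('p, 'e, 'v) interp \<Rightarrow> 'p vcrule \<Rightarrow> bool" where
  "sat_vc I c \<longleftrightarrow>
     (\<forall>v. \<exists>i<length (vc_heads c).
        I (VAt (vc_heads c ! i) v) = I (VAt (vc_body c ! i) v) \<and>
        (\<forall>j<length (vc_heads c). j \<noteq> i \<longrightarrow> I (VAt (vc_heads c ! j) v) = 0))"

definition cgap_model :: "('p, 'e, 'v) cgap \<Rightarrow> ('p, 'e, 'v) interp \<Rightarrow> bool" where
  "cgap_model \<Pi> I \<longleftrightarrow> is_interp I \<and> (\<forall>r\<in>gap_rules \<Pi>. sat_rule I r) \<and> sat_vc I (vc_rule \<Pi>)"

definition ground_inst :: "(nat \<Rightarrow> 'v) \<Rightarrow> ('p, 'e, 'v) prule \<Rightarrow> ('p, 'e, 'v) prule" where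
  "ground_inst \<theta> r =
     GRule (map_atom id id (Cst \<circ> inst \<theta>) (ghead r)) (gfun r)
           (map (\<lambda>p. (map_atom id id (Cst \<circ> inst \<theta>) (fst p), snd p)) (gbody r))"

definition ground_rules :: "('p, 'e, 'v) cgap \<Rightarrow> ('p, 'e, 'v) prule set" where
  "ground_rules \<Pi> = {ground_inst \<theta> r | \<theta> r. r \<in> gap_rules \<Pi>}"

text \<open>The annotated rule  q(v):mu <- p(v):mu  (annotation variable 0 plays mu).\<close>
definition choice_rule :: "'v \<Rightarrow> 'p \<Rightarrow> 'p \<Rightarrow> ('p, 'e, 'v) prule" where
  "choice_rule v p q = GRule (VAt q (Cst v)) (\<lambda>xs. xs ! 0) [(VAt p (Cst v), AVar 0)]"

definition coh :: "('p, 'e, 'v) cgap \<Rightarrow> ('p, 'e, 'v) interp \<Rightarrow> ('p, 'e, 'v) prule set" where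
  "coh \<Pi> I = ground_rules \<Pi> \<union>
     {choice_rule v (vc_body (vc_rule \<Pi>) ! i) (vc_heads (vc_rule \<Pi>) ! i) | v i.
        i < vc_size \<Pi> \<and> 0 < I (VAt (vc_body (vc_rule \<Pi>) ! i) v) \<and>
        I (VAt (vc_body (vc_rule \<Pi>) ! i) v) = I (VAt (vc_heads (vc_rule \<Pi>) ! i) v)}"

definition coherent :: "('p, 'e, 'v) cgap \<Rightarrow> ('p, 'e, 'v) interp \<Rightarrow> bool" where
  "coherent \<Pi> M \<longleftrightarrow> cgap_model \<Pi> M \<and> M = MM (coh \<Pi> M)"

text \<open>A state assigns to each vertex (player) an action in Q = {1..m}.\<close>
definition is_state :: "('p, 'e, 'v) cgap \<Rightarrow> ('v \<Rightarrow> nat) \<Rightarrow> bool" where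
  "is_state \<Pi> S \<longleftrightarrow> (\<forall>v. S v \<in> {1..vc_size \<Pi>})"

definition induced :: "('p, 'e, 'v) cgap \<Rightarrow> ('v \<Rightarrow> nat) \<Rightarrow> ('p, 'e, 'v) prule set" where
  "induced \<Pi> S = ground_rules \<Pi> \<union>
     {choice_rule v (vc_body (vc_rule \<Pi>) ! (S v - 1)) (vc_heads (vc_rule \<Pi>) ! (S v - 1)) | v. True}"

end

theory Submission
  imports Defs
begin

(* Let M be the least model of the induced ground GAP Pi_S.
   (1) Least models: for well-formed rules the constant-1 interpretation is a
       model and the pointwise infimum of all models is again a model, so MM P
       is the least model of P.
   (2) M has the shape demanded by the VC rule: the interpretation obtained
       from M by setting the chosen head b_i(v) to M(a_i(v)) and all other VC
       heads to 0 lies below M and is still a model of Pi_S, because VC head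
       predicates occur in no GAP rule head.  By minimality it equals M.
       Hence M satisfies the VC rule, and it is a model of Pi.
   (3) Coherence: M is a model of coh(Pi,M), and MM(coh(Pi,M)) is a model of
       Pi_S (the chosen choice rules missing from coh(Pi,M) have a body with
       value 0 under M, hence under the smaller MM(coh(Pi,M))).  Two GAPs each
       of whose least models satisfies the other have the same least model. *)

section \<open>Least models of well-formed GAPs\<close>

lemma aval_range:
  assumes "wf_annot t" and "\<forall>x. 0 \<le> \<sigma> x \<and> \<sigma> x \<le> 1"
  shows "0 \<le> aval \<sigma> t \<and> aval \<sigma> t \<le> 1"
  using assms
proof (induction \<sigma> t rule: aval.induct)
  case (3 \<sigma> f ts)
  have "set (map (aval \<sigma>) ts) \<subseteq> {0..1}" using 3 by auto
  then show ?case using 3(2) by auto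
qed auto

lemma top_is_model:
  assumes "\<forall>r\<in>P. wf_rule r"
  shows "gap_model P (\<lambda>_. 1)"
  unfolding gap_model_def is_interp_def sat_rule_def
proof (intro conjI ballI allI impI)
  fix r \<theta> and \<sigma> :: "nat \<Rightarrow> real"
  assume r: "r \<in> P" and \<sigma>: "\<forall>x. 0 \<le> \<sigma> x \<and> \<sigma> x \<le> 1"
  have wf: "wf_rule r" using assms r by auto
  have "set (map (\<lambda>p. aval \<sigma> (snd p)) (gbody r)) \<subseteq> {0..1}"
    using wf \<sigma> aval_range unfolding wf_rule_def by fastforce
  then show "gfun r (map (\<lambda>p. aval \<sigma> (snd p)) (gbody r)) \<le> 1"
    using wf unfolding wf_rule_def by auto
qed auto

text \<open>The pointwise infimum of all models of a well-formed GAP is a model below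
  every model; this is the existence half of the minimal-model theorem.\<close>
lemma least_model_exists:
  assumes "\<forall>r\<in>P. wf_rule r"
  shows "\<exists>L. gap_model P L \<and> (\<forall>J. gap_model P J \<longrightarrow> L \<le> J)"
proof -
  define L where "L = (\<lambda>A. INF J\<in>{J. gap_model P J}. J A)"
  have nonempty: "{J. gap_model P J} \<noteq> {}" using top_is_model[OF assms] by blast
  have bdd: "bdd_below ((\<lambda>J. J A) ` {J. gap_model P J})" for A
    by (rule bdd_belowI[where m=0]) (auto simp: gap_model_def is_interp_def)
  have lower: "gap_model P J \<Longrightarrow> L A \<le> J A" for J A
    unfolding L_def by (rule cINF_lower[OF bdd]) auto
  have greatest: "(\<And>J. gap_model P J \<Longrightarrow> c \<le> J A) \<Longrightarrow> c \<le> L A" for c A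
    unfolding L_def by (rule cINF_greatest[OF nonempty]) auto
  have "gap_model P L"
    unfolding gap_model_def is_interp_def
  proof (intro conjI allI ballI)
    fix A
    show "0 \<le> L A" by (rule greatest) (auto simp: gap_model_def is_interp_def)
    show "L A \<le> 1" using lower[OF top_is_model[OF assms]] by simp
  next
    fix r assume r: "r \<in> P"
    show "sat_rule L r" unfolding sat_rule_def
    proof (intro allI impI)
      fix \<theta> \<sigma>
      assume \<sigma>: "\<forall>x. 0 \<le> (\<sigma>::nat\<Rightarrow>real) x \<and> \<sigma> x \<le> 1"
        and body: "\<forall>p\<in>set (gbody r). aval \<sigma> (snd p) \<le> L (gatom \<theta> (fst p))"
      show "gfun r (map (\<lambda>p. aval \<sigma> (snd p)) (gbody r)) \<le> L (gatom \<theta> (ghead r))"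
      proof (rule greatest)
        fix J assume J: "gap_model P J"
        then have "sat_rule J r" using r by (auto simp: gap_model_def)
        moreover have "\<forall>p\<in>set (gbody r). aval \<sigma> (snd p) \<le> J (gatom \<theta> (fst p))"
          using body lower[OF J] by (meson order_trans)
        ultimately show "gfun r (map (\<lambda>p. aval \<sigma> (snd p)) (gbody r)) \<le> J (gatom \<theta> (ghead r))"
          using \<sigma> unfolding sat_rule_def by blast
      qed
    qed
  qed
  moreover have "gap_model P J \<Longrightarrow> L \<le> J" for J using lower by (simp add: le_fun_def)
  ultimately show ?thesis by blast
qed

lemma MM_eqI:
  assumes "gap_model P L" and "\<And>J. gap_model P J \<Longrightarrow> L \<le> J"
  shows "MM P = L"
  unfolding MM_def
proof (rule the_equality)
  show "gap_model P L \<and> (\<forall>J. gap_model P J \<and> J \<le> L \<longrightarrow> J = L)"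
    using assms by (auto intro: order.antisym)
next
  fix I assume "gap_model P I \<and> (\<forall>J. gap_model P J \<and> J \<le> I \<longrightarrow> J = I)"
  then show "I = L" using assms by blast
qed

lemma MM_least:
  assumes "\<forall>r\<in>P. wf_rule r"
  shows MM_model: "gap_model P (MM P)"
    and MM_below: "gap_model P J \<Longrightarrow> MM P \<le> J"
  using least_model_exists[OF assms] MM_eqI by metis+

lemma MM_eq_if_mutual_models:
  assumes "\<forall>r\<in>P. wf_rule r" and "\<forall>r\<in>C. wf_rule r"
    and "gap_model C (MM P)" and "gap_model P (MM C)"
  shows "MM P = MM C"
  using MM_below[OF assms(1) assms(4)] MM_below[OF assms(2) assms(3)]
  by (rule order.antisym)

lemma sat_choice_rule:
  assumes "is_interp I"
  shows "sat_rule I (choice_rule v p q) \<longleftrightarrow> I (VAt p v) \<le> I (VAt q v)"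
proof
  assume sat: "sat_rule I (choice_rule v p q)"
  define \<sigma> where "\<sigma> = (\<lambda>_::nat. I (VAt p v))"
  have "\<forall>x. 0 \<le> \<sigma> x \<and> \<sigma> x \<le> 1" using assms by (simp add: \<sigma>_def is_interp_def)
  then show "I (VAt p v) \<le> I (VAt q v)" using sat
    unfolding sat_rule_def choice_rule_def by (auto simp: gatom_def \<sigma>_def)
next
  assume "I (VAt p v) \<le> I (VAt q v)"
  then show "sat_rule I (choice_rule v p q)"
    unfolding sat_rule_def choice_rule_def by (auto simp: gatom_def)
qed

lemma gatom_ground_inst: "gatom \<theta>' (map_atom id id (\<lambda>x. Cst (inst \<theta> x)) a) = gatom \<theta> a"
  by (cases a) (auto simp: gatom_def)

lemma sat_rule_if_ground_insts:
  assumes "\<And>\<theta>. sat_rule I (ground_inst \<theta> r)"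
  shows "sat_rule I r"
  using assms unfolding sat_rule_def ground_inst_def
  by (simp add: gatom_ground_inst comp_def)

lemma sat_rule_lower_off_head:
  assumes "sat_rule M r" and "J \<le> M"
    and "\<And>\<theta>. J (gatom \<theta> (ghead r)) = M (gatom \<theta> (ghead r))"
  shows "sat_rule J r"
  unfolding sat_rule_def
proof (intro allI impI)
  fix \<theta> \<sigma>
  assume \<sigma>: "\<forall>x. 0 \<le> (\<sigma>::nat\<Rightarrow>real) x \<and> \<sigma> x \<le> 1"
    and body: "\<forall>p\<in>set (gbody r). aval \<sigma> (snd p) \<le> J (gatom \<theta> (fst p))"
  have "\<forall>p\<in>set (gbody r). aval \<sigma> (snd p) \<le> M (gatom \<theta> (fst p))"
    using body assms(2) by (meson le_fun_def order_trans)
  then show "gfun r (map (\<lambda>p. aval \<sigma> (snd p)) (gbody r)) \<le> J (gatom \<theta> (ghead r))"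
    using assms(1,3) \<sigma> unfolding sat_rule_def by simp
qed

lemma ground_inst_head_not_VAt:
  assumes "\<forall>t. ghead r \<noteq> VAt q t"
  shows "gatom \<theta>' (ghead (ground_inst \<theta> r)) \<noteq> VAt q w"
proof -
  have "gatom \<theta>' (ghead (ground_inst \<theta> r)) = gatom \<theta> (ghead r)"
    by (cases "ghead r") (simp_all add: ground_inst_def gatom_def)
  then show ?thesis using assms by (cases "ghead r") (auto simp: gatom_def)
qed

lemma wf_ground_rules:
  assumes "wf_cgap \<Pi>"
  shows "\<forall>r\<in>ground_rules \<Pi>. wf_rule r"
proof -
  have "wf_rule (ground_inst \<theta> r)" if "wf_rule r" for \<theta> r
    using that unfolding wf_rule_def ground_inst_def by (auto simp: comp_def)
  then show ?thesis using assms unfolding wf_cgap_def ground_rules_def by blast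
qed

lemma wf_choice_rule: "wf_rule (choice_rule v p q)"
  unfolding wf_rule_def choice_rule_def by (auto simp: length_Suc_conv)

lemma wf_induced: "wf_cgap \<Pi> \<Longrightarrow> \<forall>r\<in>induced \<Pi> S. wf_rule r"
  using wf_ground_rules wf_choice_rule unfolding induced_def by auto

lemma wf_coh: "wf_cgap \<Pi> \<Longrightarrow> \<forall>r\<in>coh \<Pi> I. wf_rule r"
  using wf_ground_rules wf_choice_rule unfolding coh_def by auto

section \<open>The least model of the induced GAP\<close>

definition chosen_head :: "('p, 'e, 'v) cgap \<Rightarrow> ('v \<Rightarrow> nat) \<Rightarrow> 'v \<Rightarrow> 'p" where
  "chosen_head \<Pi> S v = vc_heads (vc_rule \<Pi>) ! (S v - 1)"

definition chosen_body :: "('p, 'e, 'v) cgap \<Rightarrow> ('v \<Rightarrow> nat) \<Rightarrow> 'v \<Rightarrow> 'p" where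
  "chosen_body \<Pi> S v = vc_body (vc_rule \<Pi>) ! (S v - 1)"

lemma induced_eq:
  "induced \<Pi> S = ground_rules \<Pi> \<union> {choice_rule v (chosen_body \<Pi> S v) (chosen_head \<Pi> S v) | v. True}"
  unfolding induced_def chosen_head_def chosen_body_def by simp

text \<open>Actions are numbered from 1, so S v - 1 is a valid VC-rule position.\<close>
lemma state_index_bound:
  assumes "is_state \<Pi> S"
  shows "S v - 1 < length (vc_heads (vc_rule \<Pi>))"
proof -
  have "S v \<in> {1..vc_size \<Pi>}" using assms by (simp add: is_state_def)
  then show ?thesis by (auto simp: vc_size_def)
qed

definition vc_trim :: "('p, 'e, 'v) cgap \<Rightarrow> ('v \<Rightarrow> nat) \<Rightarrow> ('p, 'e, 'v) interp \<Rightarrow> ('p, 'e, 'v) interp" where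
  "vc_trim \<Pi> S M A = (case A of
     VAt q v \<Rightarrow> if q \<in> set (vc_heads (vc_rule \<Pi>))
               then (if q = chosen_head \<Pi> S v then M (VAt (chosen_body \<Pi> S v) v) else 0)
               else M A
   | _ \<Rightarrow> M A)"

text \<open>In a model of the induced GAP the chosen body value is at most the
  chosen head value, so trimming can only lower the interpretation.\<close>
lemma vc_trim_below:
  assumes "gap_model (induced \<Pi> S) M"
  shows "vc_trim \<Pi> S M \<le> M"
proof -
  have M: "is_interp M" using assms by (simp add: gap_model_def)
  have chosen: "M (VAt (chosen_body \<Pi> S v) v) \<le> M (VAt (chosen_head \<Pi> S v) v)" for v
    using assms sat_choice_rule[OF M] unfolding gap_model_def induced_eq by blast
  show ?thesis
    unfolding le_fun_def
  proof
    fix A show "vc_trim \<Pi> S M A \<le> M A"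
      using chosen M by (cases A) (auto simp: vc_trim_def is_interp_def)
  qed
qed

text \<open>Trimming a model of the induced GAP yields a model: GAP rules never
  derive VC heads, and each chosen choice rule holds with equality.\<close>
lemma vc_trim_model:
  assumes "\<forall>r\<in>gap_rules \<Pi>. \<forall>p\<in>set (vc_heads (vc_rule \<Pi>)). \<forall>t. ghead r \<noteq> VAt p t"
    and "is_state \<Pi> S" and M: "gap_model (induced \<Pi> S) M"
  shows "gap_model (induced \<Pi> S) (vc_trim \<Pi> S M)"
proof -
  let ?J = "vc_trim \<Pi> S M"
  have below: "?J \<le> M" by (rule vc_trim_below[OF M])
  have M_interp: "is_interp M" using M by (simp add: gap_model_def)
  have J_interp: "is_interp ?J"
    unfolding is_interp_def
  proof
    fix A show "0 \<le> ?J A \<and> ?J A \<le> 1"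
      using M_interp below
      by (cases A) (auto simp: vc_trim_def is_interp_def le_fun_def split: if_splits)
  qed
  have "sat_rule ?J r" if r: "r \<in> induced \<Pi> S" for r
  proof (cases "r \<in> ground_rules \<Pi>")
    case True
    then obtain \<theta> r0 where r0: "r = ground_inst \<theta> r0" "r0 \<in> gap_rules \<Pi>"
      unfolding ground_rules_def by blast
    show ?thesis
    proof (rule sat_rule_lower_off_head[OF _ below])
      show "sat_rule M r" using M r by (auto simp: gap_model_def)
      fix \<theta>' show "?J (gatom \<theta>' (ghead r)) = M (gatom \<theta>' (ghead r))"
        using assms(1) r0 ground_inst_head_not_VAt
        by (cases "gatom \<theta>' (ghead r)") (fastforce simp: vc_trim_def)+
    qed
  next
    case False
    then obtain w where w: "r = choice_rule w (chosen_body \<Pi> S w) (chosen_head \<Pi> S w)"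
      using r unfolding induced_eq by blast
    have "chosen_head \<Pi> S w \<in> set (vc_heads (vc_rule \<Pi>))"
      using state_index_bound[OF assms(2)] by (simp add: chosen_head_def)
    then have "?J (VAt (chosen_head \<Pi> S w) w) = M (VAt (chosen_body \<Pi> S w) w)"
      by (simp add: vc_trim_def)
    moreover have "?J (VAt (chosen_body \<Pi> S w) w) \<le> M (VAt (chosen_body \<Pi> S w) w)"
      using below by (simp add: le_fun_def)
    ultimately show ?thesis using w sat_choice_rule[OF J_interp] by simp
  qed
  then show ?thesis using J_interp by (simp add: gap_model_def)
qed

lemma MM_induced_trimmed:
  assumes "wf_cgap \<Pi>"
    and "\<forall>r\<in>gap_rules \<Pi>. \<forall>p\<in>set (vc_heads (vc_rule \<Pi>)). \<forall>t. ghead r \<noteq> VAt p t"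
    and "is_state \<Pi> S"
  shows "vc_trim \<Pi> S (MM (induced \<Pi> S)) = MM (induced \<Pi> S)"
proof -
  have M: "gap_model (induced \<Pi> S) (MM (induced \<Pi> S))"
    by (rule MM_model[OF wf_induced[OF assms(1)]])
  show ?thesis
    using MM_below[OF wf_induced[OF assms(1)] vc_trim_model[OF assms(2,3) M]]
      vc_trim_below[OF M] by (rule order.antisym[rotated])
qed

lemma trimmed_values:
  assumes "is_state \<Pi> S" and trimmed: "vc_trim \<Pi> S M = M"
  shows trimmed_chosen: "M (VAt (chosen_head \<Pi> S v) v) = M (VAt (chosen_body \<Pi> S v) v)"
    and trimmed_other: "q \<in> set (vc_heads (vc_rule \<Pi>)) \<Longrightarrow> q \<noteq> chosen_head \<Pi> S v \<Longrightarrow> M (VAt q v) = 0"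
proof -
  have "chosen_head \<Pi> S v \<in> set (vc_heads (vc_rule \<Pi>))"
    using state_index_bound[OF assms(1)] by (simp add: chosen_head_def)
  then show "M (VAt (chosen_head \<Pi> S v) v) = M (VAt (chosen_body \<Pi> S v) v)"
    by (subst (1) trimmed[symmetric]) (simp add: vc_trim_def)
  show "M (VAt q v) = 0" if "q \<in> set (vc_heads (vc_rule \<Pi>))" "q \<noteq> chosen_head \<Pi> S v"
    using that by (subst trimmed[symmetric]) (simp add: vc_trim_def)
qed

lemma trimmed_sat_vc:
  assumes "wf_cgap \<Pi>" and "is_state \<Pi> S" and "vc_trim \<Pi> S M = M"
  shows "sat_vc M (vc_rule \<Pi>)"
  unfolding sat_vc_def
proof
  fix v
  let ?hs = "vc_heads (vc_rule \<Pi>)" and ?bs = "vc_body (vc_rule \<Pi>)" and ?i = "S v - 1"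
  have i: "?i < length ?hs" by (rule state_index_bound[OF assms(2)])
  have distinct: "distinct ?hs" using assms(1) by (simp add: wf_cgap_def)
  show "\<exists>i<length ?hs. M (VAt (?hs ! i) v) = M (VAt (?bs ! i) v) \<and>
          (\<forall>j<length ?hs. j \<noteq> i \<longrightarrow> M (VAt (?hs ! j) v) = 0)"
  proof (intro exI conjI allI impI)
    show "?i < length ?hs" by (rule i)
    show "M (VAt (?hs ! ?i) v) = M (VAt (?bs ! ?i) v)"
      using trimmed_chosen[OF assms(2,3)] by (simp add: chosen_head_def chosen_body_def)
    fix j assume j: "j < length ?hs" "j \<noteq> ?i"
    then have "?hs ! j \<noteq> chosen_head \<Pi> S v"
      using nth_eq_iff_index_eq[OF distinct j(1) i] unfolding chosen_head_def by simp
    then show "M (VAt (?hs ! j) v) = 0" using trimmed_other[OF assms(2,3)] j(1) by simp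
  qed
qed

lemma sat_gap_rules_if_ground:
  assumes "\<forall>r\<in>ground_rules \<Pi>. sat_rule I r" and "r \<in> gap_rules \<Pi>"
  shows "sat_rule I r"
proof (rule sat_rule_if_ground_insts)
  fix \<theta> show "sat_rule I (ground_inst \<theta> r)"
    using assms unfolding ground_rules_def by blast
qed

section \<open>Coherence\<close>

text \<open>A model of the induced GAP satisfies its own coherence transform: the
  ground rules are shared, and each added choice rule holds with equality.\<close>
lemma model_of_coh:
  assumes "gap_model (induced \<Pi> S) M"
  shows "gap_model (coh \<Pi> M) M"
proof -
  have M: "is_interp M" using assms by (simp add: gap_model_def)
  have "sat_rule M r" if "r \<in> coh \<Pi> M" for r
    using that assms sat_choice_rule[OF M]
    unfolding coh_def induced_eq gap_model_def by auto
  then show ?thesis using M by (simp add: gap_model_def)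
qed

text \<open>Conversely, any model M' of coh(Pi,M) lying below a trimmed M satisfies
  the induced GAP: a chosen choice rule missing from coh(Pi,M) has a body atom
  with value 0 under M, hence under M'.\<close>
lemma coh_model_is_induced_model:
  assumes "is_state \<Pi> S" and M: "is_interp M" and trimmed: "vc_trim \<Pi> S M = M"
    and M': "gap_model (coh \<Pi> M) M'" and below: "M' \<le> M"
  shows "gap_model (induced \<Pi> S) M'"
proof -
  have M'_interp: "is_interp M'" using M' by (simp add: gap_model_def)
  have "sat_rule M' r" if r: "r \<in> induced \<Pi> S" for r
  proof (cases "r \<in> ground_rules \<Pi>")
    case True then show ?thesis using M' unfolding gap_model_def coh_def by blast
  next
    case False
    then obtain w where w: "r = choice_rule w (chosen_body \<Pi> S w) (chosen_head \<Pi> S w)"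
      using r unfolding induced_eq by blast
    let ?b = "VAt (chosen_body \<Pi> S w) w" and ?h = "VAt (chosen_head \<Pi> S w) w"
    show ?thesis
    proof (cases "M ?b = 0")
      case True
      then have "M' ?b \<le> M' ?h"
        using below M'_interp by (metis le_fun_def is_interp_def order_trans)
      then show ?thesis using w sat_choice_rule[OF M'_interp] by simp
    next
      case False
      then have "0 < M ?b" using M by (simp add: is_interp_def less_le)
      moreover have "M ?b = M ?h" using trimmed_chosen[OF assms(1) trimmed] by simp
      ultimately have "r \<in> coh \<Pi> M"
        using state_index_bound[OF assms(1), of w] unfolding coh_def w vc_size_def
        by (intro UnI2 CollectI exI[of _ w] exI[of _ "S w - 1"])
          (simp add: chosen_head_def chosen_body_def)
      then show ?thesis using M' unfolding gap_model_def by blast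
    qed
  qed
  then show ?thesis using M'_interp by (simp add: gap_model_def)
qed

theorem mainTheorem2:
  fixes \<Pi> :: "('p, 'e, 'v::finite) cgap" and S :: "'v \<Rightarrow> nat"
  assumes "wf_cgap \<Pi>"
    and "\<forall>r\<in>gap_rules \<Pi>. \<forall>p\<in>set (vc_heads (vc_rule \<Pi>)). \<forall>t. ghead r \<noteq> VAt p t"
    and "is_state \<Pi> S"
  shows "coherent \<Pi> (MM (induced \<Pi> S))"
proof -
  define M where "M = MM (induced \<Pi> S)"
  have wf_P: "\<forall>r\<in>induced \<Pi> S. wf_rule r" and wf_C: "\<forall>r\<in>coh \<Pi> M. wf_rule r"
    using wf_induced wf_coh assms(1) by blast+
  have M_model: "gap_model (induced \<Pi> S) M" unfolding M_def by (rule MM_model[OF wf_P])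
  have M_interp: "is_interp M" using M_model by (simp add: gap_model_def)
  have trimmed: "vc_trim \<Pi> S M = M" unfolding M_def by (rule MM_induced_trimmed[OF assms])
  have "\<forall>r\<in>ground_rules \<Pi>. sat_rule M r"
    using M_model by (simp add: gap_model_def induced_def)
  then have "cgap_model \<Pi> M"
    using M_interp sat_gap_rules_if_ground trimmed_sat_vc[OF assms(1,3) trimmed]
    unfolding cgap_model_def by blast
  moreover have "M = MM (coh \<Pi> M)"
  proof -
    have C_model: "gap_model (coh \<Pi> M) M" by (rule model_of_coh[OF M_model])
    have "gap_model (induced \<Pi> S) (MM (coh \<Pi> M))"
      using coh_model_is_induced_model[OF assms(3) M_interp trimmed MM_model[OF wf_C]
          MM_below[OF wf_C C_model]] .
    then show ?thesis
      using MM_eq_if_mutual_models[OF wf_P wf_C] C_model unfolding M_def by simp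
  qed
  ultimately show ?thesis unfolding coherent_def M_def by simp
qed

end
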